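(* For every triple $(r,s,t)$ of nonnegative integers with $r+s+t=d$ and $r\ge s\ge t$, there exists a nonzero vector $\mathbf v\in E^*_{[s,t]}V$ with $L_1\mathbf v=L_2\mathbf v=\mathbf 0$. Conversely, if $\mathbf v\in E^*_{[s,t]}V$ is nonzero with $L_1\mathbf v=L_2\mathbf v=\mathbf 0$, then $r=d-s-t\ge s\ge t$.
   Context: Let $d\ge1$, $\mathbb F_3=\{0,1,2\}$, $X=\mathbb F_3^d$, $V=\mathbb C^X$ with standard basis $\{\hat y:y\in X\}$. $E^*_{[s,t]}$ is the diagonal projection onto the span of those $\hat y$ with $y$ having exactly $s$ coordinates equal to $1$ and $t$ equal to $2$. Define linear operators on $V$: $L_1\hat y$ is the sum of $\hat z$ over all $z$ obtained from $y$ by changing exactly one coordinate equal to $1$ into $0$ (empty sum $=0$), and $L_2$ similarly changes one coordinate $2\mapsto1$. *)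

theory Defs
  imports Complex_Main
begin

text \<open>Elements of F_3 are represented by the naturals 0,1,2; points of X = F_3^d by
  lists of length d with entries in {0,1,2}.  Vectors of V = C^X are functions
  from lists to complex numbers vanishing outside X; the basis vector of y is the
  indicator of y.\<close>

definition X :: "nat \<Rightarrow> nat list set" where
  "X d = {y. length y = d \<and> set y \<subseteq> {0,1,2}}"

definition cnt :: "nat \<Rightarrow> nat list \<Rightarrow> nat" where
  "cnt a y = length (filter (\<lambda>c. c = a) y)"

definition in_Estar :: "nat \<Rightarrow> nat \<Rightarrow> nat \<Rightarrow> (nat list \<Rightarrow> complex) \<Rightarrow> bool" where
  "in_Estar d s t v \<longleftrightarrow> (\<forall>y. v y \<noteq> 0 \<longrightarrow> y \<in> X d \<and> cnt 1 y = s \<and> cnt 2 y = t)"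

definition change_one :: "nat \<Rightarrow> nat \<Rightarrow> nat list \<Rightarrow> nat list set" where
  "change_one a b y = {y[i := b] | i. i < length y \<and> y ! i = a}"

text \<open>Linear extension of  y-hat \<mapsto> sum of z-hat over z in change_one a b y.\<close>
definition Lop :: "nat \<Rightarrow> nat \<Rightarrow> nat \<Rightarrow> (nat list \<Rightarrow> complex) \<Rightarrow> (nat list \<Rightarrow> complex)" where
  "Lop d a b v = (\<lambda>z. \<Sum>y\<in>X d. if z \<in> change_one a b y then v y else 0)"

definition L1 :: "nat \<Rightarrow> (nat list \<Rightarrow> complex) \<Rightarrow> (nat list \<Rightarrow> complex)" where
  "L1 d = Lop d 1 0"

definition L2 :: "nat \<Rightarrow> (nat list \<Rightarrow> complex) \<Rightarrow> (nat list \<Rightarrow> complex)" where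
  "L2 d = Lop d 2 1"

end

theory Submission
  imports Defs
begin

text \<open>
  Existence: the operators obey a Leibniz rule on tensor products of vectors (splitting a point
  of X (k + n) into its first k and last n coordinates), so a tensor product of vectors killed by
  L1 and L2 is again killed by them, and the numbers of ones and twos add up. Tensoring t copies
  of the antisymmetrisation of 012, s - t copies of that of 01 and r - s copies of the point 0
  produces the required vector in dimension r + s + t.

  Converse: for a \<noteq> b the transpose of L_ab (changing a into b) is L_ba, and
  L_ba^T L_ba - L_ab^T L_ab is the diagonal operator cnt b - cnt a. If v lies in E*_[s,t]V and
  L_ab v = 0, then \<parallel>L_ba v\<parallel>^2 = (cnt b - cnt a) \<parallel>v\<parallel>^2, so cnt b - cnt a \<ge> 0 on the support
  of v. For L1 this gives d - s - t \<ge> s, for L2 it gives s \<ge> t.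
\<close>

lemma change_one_Nil [simp]: "change_one a b [] = {}"
  by (simp add: change_one_def)

lemma change_one_Cons:
  "change_one a b (c # u) = (if c = a then {b # u} else {}) \<union> Cons c ` change_one a b u"
proof (rule set_eqI iffI)+
  fix z assume "z \<in> change_one a b (c # u)"
  then obtain i where i: "i < Suc (length u)" "(c # u) ! i = a" "z = (c # u)[i := b]"
    by (auto simp: change_one_def)
  then show "z \<in> (if c = a then {b # u} else {}) \<union> Cons c ` change_one a b u"
    by (cases i) (auto simp: change_one_def)
next
  fix z assume "z \<in> (if c = a then {b # u} else {}) \<union> Cons c ` change_one a b u"
  then show "z \<in> change_one a b (c # u)"
    unfolding change_one_def
    by (cases "c = a") (fastforce intro: exI[of _ 0] exI[of _ "Suc _"])+
qed

lemma finite_change_one [simp]: "finite (change_one a b y)"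
  by (induction y) (auto simp: change_one_Cons)

lemma length_change_one: "x \<in> change_one a b y \<Longrightarrow> length x = length y"
  by (auto simp: change_one_def)

lemma change_one_swap: "x \<in> change_one a b y \<longleftrightarrow> y \<in> change_one b a x"
proof (induction y arbitrary: x)
  case Nil then show ?case by (cases x) (auto simp: change_one_Cons)
next
  case (Cons c u) then show ?case by (cases x) (auto simp: change_one_Cons)
qed

lemma self_notin_change_one: "a \<noteq> b \<Longrightarrow> y \<notin> change_one a b y"
  by (auto simp: change_one_def) (metis nth_list_update_eq)

lemma change_one_append:
  "change_one a b (u @ w) = (\<lambda>x. x @ w) ` change_one a b u \<union> (@) u ` change_one a b w"
  by (induction u) (auto simp: change_one_Cons image_Un image_image)

lemma finite_X [simp]: "finite (X d)"
proof -
  have "X d = {xs. set xs \<subseteq> {0, 1, 2} \<and> length xs = d}" by (auto simp: X_def)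
  then show ?thesis by (simp add: finite_lists_length_eq)
qed

lemma length_X: "y \<in> X d \<Longrightarrow> length y = d"
  by (simp add: X_def)

lemma append_in_X: "u \<in> X k \<Longrightarrow> w \<in> X n \<Longrightarrow> u @ w \<in> X (k + n)"
  by (simp add: X_def)

lemma X_0: "X 0 = {[]}"
  by (auto simp: X_def)

lemma X_Suc: "X (Suc n) = (\<Union>c\<in>{0, 1, 2}. Cons c ` X n)"
proof (rule set_eqI)
  fix y show "y \<in> X (Suc n) \<longleftrightarrow> y \<in> (\<Union>c\<in>{0, 1, 2}. Cons c ` X n)"
    by (cases y) (auto simp: X_def)
qed

lemma change_one_subset_X: "y \<in> X d \<Longrightarrow> b \<in> {0, 1, 2} \<Longrightarrow> change_one a b y \<subseteq> X d"
  unfolding change_one_def X_def using set_update_subset_insert by fastforce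

lemma cnt_Nil [simp]: "cnt a [] = 0"
  by (simp add: cnt_def)

lemma cnt_Cons [simp]: "cnt a (c # u) = (if c = a then 1 else 0) + cnt a u"
  by (simp add: cnt_def)

lemma cnt_append [simp]: "cnt a (u @ w) = cnt a u + cnt a w"
  by (simp add: cnt_def)

lemma cnt_0_1_2: "y \<in> X d \<Longrightarrow> cnt 0 y + cnt 1 y + cnt 2 y = d"
  unfolding X_def by (induction y arbitrary: d) auto

lemma Lop_eq_0_if_length: "length z \<noteq> d \<Longrightarrow> Lop d a b v z = 0"
  unfolding Lop_def by (rule sum.neutral) (auto simp: X_def dest: length_change_one)

lemma Lop_outside:
  assumes "z \<notin> X d" "b \<in> {0, 1, 2}"
  shows "Lop d a b v z = 0"
  unfolding Lop_def
proof (rule sum.neutral, intro ballI)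
  fix y assume "y \<in> X d"
  then have "z \<notin> change_one a b y" using change_one_subset_X assms by blast
  then show "(if z \<in> change_one a b y then v y else 0) = 0" by simp
qed

lemma Lop_eq_sum_change_one:
  assumes "\<forall>y. v y \<noteq> 0 \<longrightarrow> y \<in> X d"
  shows "Lop d a b v z = (\<Sum>y\<in>change_one b a z. v y)"
proof -
  have "Lop d a b v z = (\<Sum>y\<in>X d \<inter> change_one b a z. v y)"
    unfolding Lop_def change_one_swap[of z] by (simp add: sum.inter_restrict)
  also have "\<dots> = (\<Sum>y\<in>change_one b a z. v y)"
    using assms by (intro sum.mono_neutral_left) auto
  finally show ?thesis .
qed

lemma Lop_eq_0_iff:
  assumes "\<forall>y. v y \<noteq> 0 \<longrightarrow> y \<in> X d" "b \<in> {0, 1, 2}"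
  shows "Lop d a b v = (\<lambda>_. 0) \<longleftrightarrow> (\<forall>z\<in>X d. (\<Sum>y\<in>change_one b a z. v y) = 0)"
proof -
  have "z \<notin> X d \<Longrightarrow> (\<Sum>y\<in>change_one b a z. v y) = 0" for z
    using Lop_outside[OF _ assms(2)] by (simp add: Lop_eq_sum_change_one[OF assms(1), symmetric])
  then show ?thesis
    unfolding fun_eq_iff Lop_eq_sum_change_one[OF assms(1)] by blast
qed

definition tens :: "nat \<Rightarrow> (nat list \<Rightarrow> complex) \<Rightarrow> (nat list \<Rightarrow> complex) \<Rightarrow> nat list \<Rightarrow> complex" where
  "tens k p v y = p (take k y) * v (drop k y)"

lemma tens_append: "length u = k \<Longrightarrow> tens k p v (u @ w) = p u * v w"
  by (simp add: tens_def)

lemma tens_support: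
  assumes "\<forall>y. p y \<noteq> 0 \<longrightarrow> y \<in> X k" "\<forall>y. v y \<noteq> 0 \<longrightarrow> y \<in> X n"
  shows "\<forall>y. tens k p v y \<noteq> 0 \<longrightarrow> y \<in> X (k + n)"
  using assms append_in_X by (fastforce simp: tens_def)

lemma Lop_tens_append:
  assumes "a \<noteq> b"
    and p: "\<forall>y. p y \<noteq> 0 \<longrightarrow> y \<in> X k" and v: "\<forall>y. v y \<noteq> 0 \<longrightarrow> y \<in> X n"
    and "length u = k"
  shows "Lop (k + n) a b (tens k p v) (u @ w) = Lop k a b p u * v w + p u * Lop n a b v w"
proof -
  have disjoint: "(\<lambda>x. x @ w) ` change_one b a u \<inter> (@) u ` change_one b a w = {}"
    using assms(1) by (auto dest: length_change_one simp: self_notin_change_one)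
  have "Lop (k + n) a b (tens k p v) (u @ w)
      = (\<Sum>y\<in>(\<lambda>x. x @ w) ` change_one b a u. tens k p v y) + (\<Sum>y\<in>(@) u ` change_one b a w. tens k p v y)"
    unfolding Lop_eq_sum_change_one[OF tens_support[OF p v]] change_one_append
    by (rule sum.union_disjoint[OF _ _ disjoint]) auto
  also have "\<dots> = (\<Sum>x\<in>change_one b a u. p x * v w) + (\<Sum>x\<in>change_one b a w. p u * v x)"
    using assms(4) by (simp add: sum.reindex inj_on_def tens_append length_change_one)
  also have "\<dots> = Lop k a b p u * v w + p u * Lop n a b v w"
    by (simp add: Lop_eq_sum_change_one[OF p] Lop_eq_sum_change_one[OF v] sum_distrib_left sum_distrib_right)
  finally show ?thesis .
qed

lemma Lop_tens_eq_0:
  assumes "a \<noteq> b" "\<forall>y. p y \<noteq> 0 \<longrightarrow> y \<in> X k" "\<forall>y. v y \<noteq> 0 \<longrightarrow> y \<in> X n"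
    and "Lop k a b p = (\<lambda>_. 0)" "Lop n a b v = (\<lambda>_. 0)"
  shows "Lop (k + n) a b (tens k p v) = (\<lambda>_. 0)"
proof
  fix z
  show "Lop (k + n) a b (tens k p v) z = 0"
  proof (cases "length z = k + n")
    case True
    then have "length (take k z) = k" by simp
    from Lop_tens_append[OF assms(1-3) this, of "drop k z"] show ?thesis
      using assms(4,5) by simp
  qed (rule Lop_eq_0_if_length)
qed

definition highest_weight :: "nat \<Rightarrow> nat \<Rightarrow> nat \<Rightarrow> (nat list \<Rightarrow> complex) \<Rightarrow> bool" where
  "highest_weight d s t v \<longleftrightarrow>
     in_Estar d s t v \<and> v \<noteq> (\<lambda>_. 0) \<and> L1 d v = (\<lambda>_. 0) \<and> L2 d v = (\<lambda>_. 0)"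

lemma highest_weight_tens:
  assumes p: "highest_weight k s' t' p" and v: "highest_weight n s t v"
  shows "highest_weight (k + n) (s' + s) (t' + t) (tens k p v)"
proof -
  have sp: "\<forall>y. p y \<noteq> 0 \<longrightarrow> y \<in> X k" and sv: "\<forall>y. v y \<noteq> 0 \<longrightarrow> y \<in> X n"
    using p v by (auto simp: highest_weight_def in_Estar_def)
  have "in_Estar (k + n) (s' + s) (t' + t) (tens k p v)"
    unfolding in_Estar_def
  proof (intro allI impI)
    fix y assume "tens k p v y \<noteq> 0"
    then have "p (take k y) \<noteq> 0" "v (drop k y) \<noteq> 0" by (auto simp: tens_def)
    then have "take k y \<in> X k" "drop k y \<in> X n"
      "cnt 1 (take k y) = s'" "cnt 2 (take k y) = t'" "cnt 1 (drop k y) = s" "cnt 2 (drop k y) = t"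
      using p v by (auto simp: highest_weight_def in_Estar_def)
    then show "y \<in> X (k + n) \<and> cnt 1 y = s' + s \<and> cnt 2 y = t' + t"
      using append_in_X cnt_append append_take_drop_id by metis
  qed
  moreover obtain y1 y2 where "p y1 \<noteq> 0" "v y2 \<noteq> 0"
    using p v by (auto simp: highest_weight_def fun_eq_iff)
  then have "tens k p v (y1 @ y2) \<noteq> 0"
    using sp by (simp add: tens_append length_X)
  moreover have "Lop (k + n) a b (tens k p v) = (\<lambda>_. 0)" if "(a, b) \<in> {(1, 0), (2, 1)}" for a b
    using that p v by (intro Lop_tens_eq_0 sp sv) (auto simp: highest_weight_def L1_def L2_def)
  ultimately show ?thesis
    unfolding highest_weight_def L1_def L2_def by fastforce
qed

lemma highest_weight_tens_power:
  assumes "highest_weight k s' t' p" "highest_weight n s t v"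
  shows "\<exists>w. highest_weight (m * k + n) (m * s' + s) (m * t' + t) w"
proof (induction m)
  case 0 then show ?case using assms(2) by auto
next
  case (Suc m)
  then obtain w where "highest_weight (m * k + n) (m * s' + s) (m * t' + t) w" by blast
  from highest_weight_tens[OF assms(1) this] show ?case by (auto simp: add.assoc)
qed

lemma highest_weightI:
  assumes "in_Estar d s t v" "v y \<noteq> 0"
    and "\<forall>z\<in>X d. (\<Sum>y\<in>change_one 0 1 z. v y) = 0"
    and "\<forall>z\<in>X d. (\<Sum>y\<in>change_one 1 2 z. v y) = 0"
  shows "highest_weight d s t v"
proof -
  have "\<forall>y. v y \<noteq> 0 \<longrightarrow> y \<in> X d" using assms(1) by (simp add: in_Estar_def)
  from Lop_eq_0_iff[OF this] have "L1 d v = (\<lambda>_. 0)" "L2 d v = (\<lambda>_. 0)"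
    using assms(3,4) by (simp_all add: L1_def L2_def)
  moreover have "v \<noteq> (\<lambda>_. 0)" using assms(2) by auto
  ultimately show ?thesis
    using assms(1) by (simp add: highest_weight_def)
qed

definition unit_vec :: "nat list \<Rightarrow> nat list \<Rightarrow> complex" where
  "unit_vec x y = (if y = x then 1 else 0)"

text \<open>Antisymmetrisations of 01 and 012: every point hit by L1 or L2 is hit from exactly two
  terms, and these have opposite signs.\<close>
definition alt2 :: "nat list \<Rightarrow> complex" where
  "alt2 y = unit_vec [0, 1] y - unit_vec [1, 0] y"

definition alt3 :: "nat list \<Rightarrow> complex" where
  "alt3 y = unit_vec [0, 1, 2] y + unit_vec [1, 2, 0] y + unit_vec [2, 0, 1] y
     - unit_vec [1, 0, 2] y - unit_vec [0, 2, 1] y - unit_vec [2, 1, 0] y"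

lemma highest_weight_unit_vec_Nil: "highest_weight 0 0 0 (unit_vec [])"
  by (rule highest_weightI[where y = "[]"]) (auto simp: in_Estar_def unit_vec_def X_0)

lemma highest_weight_unit_vec_0: "highest_weight 1 0 0 (unit_vec [0])"
proof (rule highest_weightI[where y = "[0]"])
  show "in_Estar 1 0 0 (unit_vec [0])"
    by (auto simp: in_Estar_def unit_vec_def X_def)
qed (auto simp: X_Suc X_0 change_one_Cons unit_vec_def)

lemma highest_weight_alt2: "highest_weight 2 1 0 alt2"
proof (rule highest_weightI[where y = "[0, 1]"])
  show "in_Estar 2 1 0 alt2"
    unfolding in_Estar_def
  proof (intro allI impI)
    fix y assume "alt2 y \<noteq> 0"
    then have "y \<in> {[0, 1], [1, 0]}"
      by (rule contrapos_np) (simp add: alt2_def unit_vec_def)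
    then show "y \<in> X 2 \<and> cnt 1 y = 1 \<and> cnt 2 y = 0"
      by (auto simp: X_def)
  qed
qed (auto simp: numeral_2_eq_2 X_Suc X_0 change_one_Cons alt2_def unit_vec_def)

lemma highest_weight_alt3: "highest_weight 3 1 1 alt3"
proof (rule highest_weightI[where y = "[0, 1, 2]"])
  show "in_Estar 3 1 1 alt3"
    unfolding in_Estar_def
  proof (intro allI impI)
    fix y assume "alt3 y \<noteq> 0"
    then have "y \<in> {[0, 1, 2], [1, 2, 0], [2, 0, 1], [1, 0, 2], [0, 2, 1], [2, 1, 0]}"
      by (rule contrapos_np) (simp add: alt3_def unit_vec_def)
    then show "y \<in> X 3 \<and> cnt 1 y = 1 \<and> cnt 2 y = 1"
      by (auto simp: X_def)
  qed
qed (simp_all add: numeral_3_eq_3 X_Suc X_0 change_one_Cons alt3_def unit_vec_def)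

lemma ex_highest_weight:
  assumes "t \<le> s" "s \<le> r"
  shows "\<exists>v. highest_weight (r + s + t) s t v"
proof -
  obtain v1 where v1: "highest_weight (t * 3 + 0) (t * 1 + 0) (t * 1 + 0) v1"
    using highest_weight_tens_power[OF highest_weight_alt3 highest_weight_unit_vec_Nil] by blast
  obtain v2 where v2: "highest_weight ((s - t) * 2 + (t * 3 + 0)) ((s - t) * 1 + (t * 1 + 0))
      ((s - t) * 0 + (t * 1 + 0)) v2"
    using highest_weight_tens_power[OF highest_weight_alt2 v1] by blast
  obtain v3 where "highest_weight ((r - s) * 1 + ((s - t) * 2 + (t * 3 + 0)))
      ((r - s) * 0 + ((s - t) * 1 + (t * 1 + 0))) ((r - s) * 0 + ((s - t) * 0 + (t * 1 + 0))) v3"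
    using highest_weight_tens_power[OF highest_weight_unit_vec_0 v2] by blast
  moreover have "(r - s) * 1 + ((s - t) * 2 + (t * 3 + 0)) = r + s + t"
    "(r - s) * 0 + ((s - t) * 1 + (t * 1 + 0)) = s" "(r - s) * 0 + ((s - t) * 0 + (t * 1 + 0)) = t"
    using assms by simp_all
  ultimately show ?thesis by metis
qed

lemma card_change_one_Int_Cons:
  assumes "a \<noteq> b"
  shows "card (change_one a b (c # u) \<inter> change_one a b (c' # u')) =
    (if c = c' then (if c = a \<and> u = u' then 1 else 0) + card (change_one a b u \<inter> change_one a b u')
     else (if c = a \<and> c' = b \<and> u \<in> change_one a b u' then 1 else 0)
        + (if c' = a \<and> c = b \<and> u' \<in> change_one a b u then 1 else 0))"
proof (cases "c = c'")
  case True
  let ?C = "Cons c ` (change_one a b u \<inter> change_one a b u')"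
  have eq: "change_one a b (c # u) \<inter> change_one a b (c' # u') =
      (if c = a \<and> u = u' then {b # u} else {}) \<union> ?C"
    using True assms by (auto simp: change_one_Cons)
  have disjoint: "(if c = a \<and> u = u' then {b # u} else {}) \<inter> ?C = {}"
    using assms by auto
  have "card ?C = card (change_one a b u \<inter> change_one a b u')"
    by (rule card_image) simp
  then show ?thesis
    unfolding eq using True card_Un_disjoint[OF _ _ disjoint] by simp
next
  case False
  have "change_one a b (c # u) \<inter> change_one a b (c' # u') =
      (if c = a \<and> c' = b \<and> u \<in> change_one a b u' then {b # u} else {}) \<union>
      (if c' = a \<and> c = b \<and> u' \<in> change_one a b u then {b # u'} else {})"
    using False assms by (auto simp: change_one_Cons)
  then show ?thesis
    using False assms by auto
qed

text \<open>card (change_one a b y \<inter> change_one a b y') is the (y, y') entry of L_ab^T L_ab, so this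
  says that L_ba^T L_ba - L_ab^T L_ab is diagonal with entries cnt b - cnt a.\<close>
lemma card_change_one_Int_diff:
  assumes "a \<noteq> b" "length u = length u'"
  shows "int (card (change_one b a u \<inter> change_one b a u')) - int (card (change_one a b u \<inter> change_one a b u'))
     = (if u = u' then int (cnt b u) - int (cnt a u) else 0)"
  using assms(2)
proof (induction u arbitrary: u')
  case Nil then show ?case by simp
next
  case (Cons c u)
  then obtain c' w where u': "u' = c' # w" and "length u = length w" by (cases u') auto
  then have IH: "int (card (change_one b a u \<inter> change_one b a w)) - int (card (change_one a b u \<inter> change_one a b w))
      = (if u = w then int (cnt b u) - int (cnt a u) else 0)"
    using Cons.IH by blast
  show ?case
    unfolding u' card_change_one_Int_Cons[OF assms(1)] card_change_one_Int_Cons[OF assms(1)[symmetric]]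
      change_one_swap[of u b a w] change_one_swap[of w b a u]
    using IH assms(1) by auto
qed

definition sqnorm :: "nat \<Rightarrow> (nat list \<Rightarrow> complex) \<Rightarrow> complex" where
  "sqnorm d w = (\<Sum>z\<in>X d. w z * cnj (w z))"

lemma Re_sqnorm_nonneg: "0 \<le> Re (sqnorm d w)"
  unfolding sqnorm_def Re_sum by (intro sum_nonneg) (simp add: complex_mult_cnj)

lemma Re_sqnorm_pos:
  assumes "y \<in> X d" "w y \<noteq> 0"
  shows "0 < Re (sqnorm d w)"
proof -
  have "0 < Re (w y * cnj (w y))"
    using assms(2) by (simp add: complex_mult_cnj complex_eq_iff sum_power2_gt_zero_iff)
  also have "\<dots> \<le> (\<Sum>z\<in>X d. Re (w z * cnj (w z)))"
    by (rule member_le_sum) (auto simp: complex_mult_cnj assms(1))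
  finally show ?thesis unfolding sqnorm_def Re_sum .
qed

lemma sqnorm_Lop:
  assumes "b \<in> {0, 1, 2}"
  shows "sqnorm d (Lop d a b v) =
    (\<Sum>y\<in>X d. \<Sum>y'\<in>X d. v y * cnj (v y') * of_nat (card (change_one a b y \<inter> change_one a b y')))"
proof -
  let ?f = "\<lambda>z y. if z \<in> change_one a b y then v y else 0"
  have "sqnorm d (Lop d a b v) = (\<Sum>z\<in>X d. \<Sum>y\<in>X d. \<Sum>y'\<in>X d. ?f z y * cnj (?f z y'))"
    unfolding sqnorm_def Lop_def cnj_sum sum_product by simp
  also have "\<dots> = (\<Sum>y\<in>X d. \<Sum>y'\<in>X d. \<Sum>z\<in>X d. ?f z y * cnj (?f z y'))"
    by (subst sum.swap) (subst (2) sum.swap, rule refl)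
  also have "\<dots> = (\<Sum>y\<in>X d. \<Sum>y'\<in>X d. v y * cnj (v y') * of_nat (card (change_one a b y \<inter> change_one a b y')))"
  proof (intro sum.cong refl)
    fix y y' assume "y \<in> X d"
    then have "change_one a b y \<inter> change_one a b y' \<subseteq> X d"
      using change_one_subset_X[OF _ assms] by blast
    then have "(\<Sum>z\<in>X d. ?f z y * cnj (?f z y')) = (\<Sum>z\<in>change_one a b y \<inter> change_one a b y'. v y * cnj (v y'))"
      by (intro sum.mono_neutral_cong_right) auto
    then show "(\<Sum>z\<in>X d. ?f z y * cnj (?f z y')) = v y * cnj (v y') * of_nat (card (change_one a b y \<inter> change_one a b y'))"
      by simp
  qed
  finally show ?thesis .
qed

lemma sqnorm_Lop_swap:
  assumes ab: "a \<in> {0, 1, 2}" "b \<in> {0, 1, 2}" "a \<noteq> b"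
    and weight: "\<forall>y. v y \<noteq> 0 \<longrightarrow> y \<in> X d \<and> int (cnt b y) - int (cnt a y) = h"
  shows "sqnorm d (Lop d b a v) = sqnorm d (Lop d a b v) + of_int h * sqnorm d v"
proof -
  have "sqnorm d (Lop d b a v) - sqnorm d (Lop d a b v) =
    (\<Sum>y\<in>X d. \<Sum>y'\<in>X d. v y * cnj (v y') * (of_nat (card (change_one b a y \<inter> change_one b a y'))
        - of_nat (card (change_one a b y \<inter> change_one a b y'))))"
    unfolding sqnorm_Lop[OF ab(1)] sqnorm_Lop[OF ab(2)] sum_subtractf[symmetric] right_diff_distrib
    by simp
  also have "\<dots> = (\<Sum>y\<in>X d. \<Sum>y'\<in>X d. if y = y' then v y * cnj (v y) * of_int (int (cnt b y) - int (cnt a y)) else 0)"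
  proof (intro sum.cong refl)
    fix y y' assume "y \<in> X d" "y' \<in> X d"
    then have "length y = length y'" by (simp add: length_X)
    have "(of_nat (card (change_one b a y \<inter> change_one b a y'))
        - of_nat (card (change_one a b y \<inter> change_one a b y')) :: complex)
      = of_int (int (card (change_one b a y \<inter> change_one b a y'))
        - int (card (change_one a b y \<inter> change_one a b y')))"
      by simp
    also have "\<dots> = of_int (if y = y' then int (cnt b y) - int (cnt a y) else 0)"
      unfolding card_change_one_Int_diff[OF ab(3) \<open>length y = length y'\<close>] ..
    finally show "v y * cnj (v y') * (of_nat (card (change_one b a y \<inter> change_one b a y'))
        - of_nat (card (change_one a b y \<inter> change_one a b y')))
      = (if y = y' then v y * cnj (v y) * of_int (int (cnt b y) - int (cnt a y)) else 0)"
      by simp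
  qed
  also have "\<dots> = (\<Sum>y\<in>X d. v y * cnj (v y) * of_int (int (cnt b y) - int (cnt a y)))"
    by (simp add: sum.delta)
  also have "\<dots> = (\<Sum>y\<in>X d. of_int h * (v y * cnj (v y)))"
    using weight by (intro sum.cong refl) (metis mult.commute mult_zero_left)
  also have "\<dots> = of_int h * sqnorm d v"
    by (simp add: sqnorm_def sum_distrib_left)
  finally show ?thesis by (simp add: algebra_simps)
qed

lemma weight_nonneg_if_Lop_eq_0:
  assumes ab: "a \<in> {0, 1, 2}" "b \<in> {0, 1, 2}" "a \<noteq> b"
    and weight: "\<forall>y. v y \<noteq> 0 \<longrightarrow> y \<in> X d \<and> int (cnt b y) - int (cnt a y) = h"
    and "Lop d a b v = (\<lambda>_. 0)" "v y \<noteq> 0"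
  shows "0 \<le> h"
proof -
  have "sqnorm d (Lop d a b v) = 0" using assms(5) by (simp add: sqnorm_def)
  then have "sqnorm d (Lop d b a v) = of_int h * sqnorm d v"
    using sqnorm_Lop_swap[OF ab weight] by simp
  then have "0 \<le> of_int h * Re (sqnorm d v)"
    using Re_sqnorm_nonneg[of d "Lop d b a v"] by simp
  moreover have "0 < Re (sqnorm d v)"
    using Re_sqnorm_pos weight assms(6) by blast
  ultimately show ?thesis by (simp add: zero_le_mult_iff)
qed

lemma highest_weight_bounds:
  assumes "highest_weight d s t v"
  shows "s + t \<le> d \<and> s \<le> d - s - t \<and> t \<le> s"
proof -
  obtain y where "v y \<noteq> 0" using assms by (auto simp: highest_weight_def fun_eq_iff)
  have support: "y \<in> X d \<and> cnt 1 y = s \<and> cnt 2 y = t \<and> cnt 0 y = d - s - t \<and> s + t \<le> d"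
    if "v y \<noteq> 0" for y
    using that assms cnt_0_1_2[of y d] by (auto simp: highest_weight_def in_Estar_def)
  have "0 \<le> int (d - s - t) - int s"
    by (rule weight_nonneg_if_Lop_eq_0[of 1 0 v d _ y])
      (use assms support \<open>v y \<noteq> 0\<close> in \<open>auto simp: highest_weight_def L1_def\<close>)
  moreover have "0 \<le> int s - int t"
    by (rule weight_nonneg_if_Lop_eq_0[of 2 1 v d _ y])
      (use assms support \<open>v y \<noteq> 0\<close> in \<open>auto simp: highest_weight_def L2_def\<close>)
  ultimately show ?thesis using support[OF \<open>v y \<noteq> 0\<close>] by linarith
qed

theorem lemma4p4:
  fixes d :: nat
  assumes "d \<ge> 1"
  shows "(\<forall>r s t. r + s + t = d \<and> r \<ge> s \<and> s \<ge> t \<longrightarrow>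
            (\<exists>v. in_Estar d s t v \<and> v \<noteq> (\<lambda>_. 0) \<and> L1 d v = (\<lambda>_. 0) \<and> L2 d v = (\<lambda>_. 0)))
       \<and> (\<forall>s t v. in_Estar d s t v \<and> v \<noteq> (\<lambda>_. 0) \<and> L1 d v = (\<lambda>_. 0) \<and> L2 d v = (\<lambda>_. 0) \<longrightarrow>
            s + t \<le> d \<and> d - s - t \<ge> s \<and> s \<ge> t)"
proof (intro conjI allI impI)
  fix r s t assume "r + s + t = d \<and> r \<ge> s \<and> s \<ge> t"
  then show "\<exists>v. in_Estar d s t v \<and> v \<noteq> (\<lambda>_. 0) \<and> L1 d v = (\<lambda>_. 0) \<and> L2 d v = (\<lambda>_. 0)"
    using ex_highest_weight[of t s r] unfolding highest_weight_def by auto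
next
  fix s t v assume "in_Estar d s t v \<and> v \<noteq> (\<lambda>_. 0) \<and> L1 d v = (\<lambda>_. 0) \<and> L2 d v = (\<lambda>_. 0)"
  then have "highest_weight d s t v" unfolding highest_weight_def .
  from highest_weight_bounds[OF this] show "s + t \<le> d" "d - s - t \<ge> s" "s \<ge> t" by auto
qed

end
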